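(* Let $\mathcal{H}$ be a real Hilbert space, $f:\mathcal{H}\to\mathbb{R}$ $\mu$-strongly convex and $L$-smooth with $0<\mu<L<\infty$, $g:\mathcal{H}\to\mathbb{R}\cup\{+\infty\}$ convex, proper and lower semicontinuous, $q=\mu/L$, and $x^\star$ the unique minimizer of $f+g$. Let the Prox-TMM iterates $z^k$ and the quantities $\mathcal{V}_k^\infty$ be as defined in the context. Then for every $k\in\mathbb{N}$ (i.e. $k\ge1$), $$\mu\|z^{k+1}-x^\star\|^2\le(1-\sqrt q)^2\,\mathcal{V}_k^\infty.$$
   Context: $\operatorname{Prox}^{\gamma}_g(x)=\operatorname{argmin}_z\big(g(z)+\frac{1}{2\gamma}\|x-z\|^2\big)$. Prox-TMM from $x^0\in\mathcal{H}$: $z^0=x^0$, and for $k\ge0$: $y^k=\frac{2\sqrt q}{1+\sqrt q}z^k+\frac{1-\sqrt q}{1+\sqrt q}x^k$, $\bar z^{k+1}=(1-\sqrt q)z^k+\sqrt q\,y^k-\frac{1}{\sqrt qL}\nabla f(y^k)$, $z^{k+1}=\operatorname{Prox}^{1/(\sqrt qL)}_g(\bar z^{k+1})$, $x^{k+1}=y^k-\frac1L\nabla f(y^k)-\sqrt q(\bar z^{k+1}-z^{k+1})$. Define $\mathcal{I}_f(x,y)=f(x)-f(y)-\langle\nabla f(y),x-y\rangle-\frac{\mu}{2}\|x-y\|^2-\frac{1}{2(L-\mu)}\|\nabla f(x)-\nabla f(y)-\mu(x-y)\|^2$ and $\mathcal{I}_g(x,y,s)=g(x)-g(y)-\langle s,x-y\rangle$.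 For $k\ge1$ let $s_g^k=\sqrt qL(\bar z^k-z^k)$, let $s_g^\star=-\nabla f(x^\star)$, and $$\mathcal{V}_k^\infty=(1-q)\mathcal{I}_f(y^{k-1},x^\star)+q\,\mathcal{I}_g(x^\star,z^k,s_g^k)+\sqrt q(\sqrt q-1)\mathcal{I}_g(z^k,x^\star,s_g^\star)+\frac1{2L}\|s_g^k-s_g^\star\|^2+\mu\|z^k-x^\star\|^2.$$ *)

theory Defs
  imports "HOL-Analysis.Analysis"
begin

definition strongly_convex :: "real \<Rightarrow> ('a::real_inner \<Rightarrow> real) \<Rightarrow> bool" where
  "strongly_convex \<mu> f \<longleftrightarrow> convex_on UNIV (\<lambda>x. f x - \<mu> / 2 * (norm x)\<^sup>2)"

definition ereal_convex :: "('a::real_vector \<Rightarrow> ereal) \<Rightarrow> bool" where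
  "ereal_convex g \<longleftrightarrow> (\<forall>x y t. 0 \<le> t \<and> t \<le> 1 \<longrightarrow>
      g ((1 - t) *\<^sub>R x + t *\<^sub>R y) \<le> ereal (1 - t) * g x + ereal t * g y)"

definition ereal_proper :: "('a \<Rightarrow> ereal) \<Rightarrow> bool" where
  "ereal_proper g \<longleftrightarrow> (\<forall>x. g x \<noteq> -\<infinity>) \<and> (\<exists>x. g x < \<infinity>)"

definition lsc :: "('a::topological_space \<Rightarrow> ereal) \<Rightarrow> bool" where
  "lsc g \<longleftrightarrow> (\<forall>x. g x \<le> Liminf (at x) g)"

definition is_prox :: "('a::real_normed_vector \<Rightarrow> ereal) \<Rightarrow> real \<Rightarrow> 'a \<Rightarrow> 'a \<Rightarrow> bool" where
  "is_prox g \<gamma> x z \<longleftrightarrow> (\<forall>w. g z + ereal (1 / (2 * \<gamma>) * (norm (x - z))\<^sup>2)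
                              \<le> g w + ereal (1 / (2 * \<gamma>) * (norm (x - w))\<^sup>2))"

definition I_f :: "real \<Rightarrow> real \<Rightarrow> ('a::real_inner \<Rightarrow> real) \<Rightarrow> ('a \<Rightarrow> 'a) \<Rightarrow> 'a \<Rightarrow> 'a \<Rightarrow> real" where
  "I_f \<mu> L f df x y = f x - f y - inner (df y) (x - y) - \<mu> / 2 * (norm (x - y))\<^sup>2
     - 1 / (2 * (L - \<mu>)) * (norm (df x - df y - \<mu> *\<^sub>R (x - y)))\<^sup>2"

definition I_g :: "('a::real_inner \<Rightarrow> ereal) \<Rightarrow> 'a \<Rightarrow> 'a \<Rightarrow> 'a \<Rightarrow> ereal" where
  "I_g g x y s = g x - g y - ereal (inner s (x - y))"

end

theory Submission
  imports Defs
begin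

(* The estimate is a performance-estimation certificate: (1 - sqrt q)^2 V_k - mu |z_(k+1) - xs|^2
   is a nonnegative combination of the interpolation inequalities I_f >= 0 for the pairs
   (y_(k-1), y_k), (y_k, xs), (xs, y_k), of the subgradient inequalities of g for the pairs
   (z_(k+1), z_k), (z_(k+1), xs), (xs, z_(k+1)), and of |s_k - s_(k+1)|^2 and |s_(k+1) - s_xs|^2.
   Tilting f and g by the optimality condition - grad f xs in dg xs, removing mu/2 |. - xs|^2
   from f and dividing by L reduces this to an identity for a convex, (1 - q)-smooth function
   minimised at 0, which follows from the two recursions of the iteration alone. *)

section \<open>Smooth strongly convex functions\<close>

lemma power2_norm_diff:
  fixes a b :: "'a::real_inner"
  shows "(norm (a - b))\<^sup>2 = (norm a)\<^sup>2 - 2 * inner a b + (norm b)\<^sup>2"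
  unfolding power2_norm_eq_inner by (simp add: inner_diff_left inner_diff_right inner_commute)

lemma has_real_derivative_along_line:
  fixes f :: "'a::real_inner \<Rightarrow> real"
  assumes grad: "\<And>u. (f has_derivative (\<lambda>h. inner (df u) h)) (at u)"
  shows "((\<lambda>t. f (u + t *\<^sub>R d)) has_real_derivative inner (df (u + t *\<^sub>R d)) d) (at t)"
proof -
  have "((\<lambda>t. u + t *\<^sub>R d) has_derivative (\<lambda>h. h *\<^sub>R d)) (at t)"
    by (auto intro!: derivative_eq_intros)
  from has_derivative_compose[OF this grad]
  have "((\<lambda>t. f (u + t *\<^sub>R d)) has_derivative (\<lambda>h. h * inner (df (u + t *\<^sub>R d)) d)) (at t)"
    by simp
  then show ?thesis
    by (simp add: has_field_derivative_def mult.commute[of _ "inner _ _"])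
qed

lemma lipschitz_gradient_upper_bound:
  fixes f :: "'a::real_inner \<Rightarrow> real"
  assumes grad: "\<And>u. (f has_derivative (\<lambda>h. inner (df u) h)) (at u)"
    and lipschitz: "\<And>u v. norm (df u - df v) \<le> L * norm (u - v)"
  shows "f v \<le> f u + inner (df u) (v - u) + L / 2 * (norm (v - u))\<^sup>2"
proof -
  define d where "d = v - u"
  define \<psi> where "\<psi> t = f (u + t *\<^sub>R d) - t * inner (df u) d - L / 2 * t\<^sup>2 * (norm d)\<^sup>2" for t
  have "\<psi> 1 \<le> \<psi> 0"
  proof (rule deriv_nonpos_imp_antimono[where g = \<psi>])
    fix t :: real
    assume t: "t \<in> {0..1}"
    show "(\<psi> has_real_derivative inner (df (u + t *\<^sub>R d) - df u) d - L * t * (norm d)\<^sup>2) (at t)"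
      unfolding \<psi>_def inner_diff_left
      by (auto intro!: derivative_eq_intros has_real_derivative_along_line[OF grad])
    have "inner (df (u + t *\<^sub>R d) - df u) d \<le> norm (df (u + t *\<^sub>R d) - df u) * norm d"
      by (rule norm_cauchy_schwarz)
    also have "\<dots> \<le> L * norm (t *\<^sub>R d) * norm d"
      using lipschitz[of "u + t *\<^sub>R d" u] by (simp add: mult_right_mono)
    also have "\<dots> = L * t * (norm d)\<^sup>2"
      using t by (simp add: power2_eq_square)
    finally show "inner (df (u + t *\<^sub>R d) - df u) d - L * t * (norm d)\<^sup>2 \<le> 0"
      by simp
  qed simp
  then show ?thesis
    by (simp add: \<psi>_def d_def)
qed

lemma strongly_convex_lower_bound:
  fixes f :: "'a::real_inner \<Rightarrow> real"
  assumes grad: "\<And>u. (f has_derivative (\<lambda>h. inner (df u) h)) (at u)"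
    and sconv: "strongly_convex \<mu> f"
  shows "f u + inner (df u) (v - u) + \<mu> / 2 * (norm (v - u))\<^sup>2 \<le> f v"
proof -
  define d where "d = v - u"
  define \<phi> where "\<phi> t = f (u + t *\<^sub>R d) - \<mu> / 2 * (inner u u + 2 * t * inner u d + t\<^sup>2 * inner d d)" for t
  have \<phi>_eq: "\<phi> t = f (u + t *\<^sub>R d) - \<mu> / 2 * (norm (u + t *\<^sub>R d))\<^sup>2" for t
    unfolding \<phi>_def power2_norm_eq_inner
    by (simp add: inner_add_left inner_add_right inner_commute power2_eq_square)
  have "convex_on UNIV \<phi>"
  proof (rule convex_onI)
    fix t x y :: real
    assume "0 < t" "t < 1"
    have "(1 - t) *\<^sub>R (u + x *\<^sub>R d) + t *\<^sub>R (u + y *\<^sub>R d) = u + ((1 - t) * x + t * y) *\<^sub>R d"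
      by (simp add: algebra_simps)
    then show "\<phi> ((1 - t) *\<^sub>R x + t *\<^sub>R y) \<le> (1 - t) * \<phi> x + t * \<phi> y"
      using convex_onD[OF sconv[unfolded strongly_convex_def], of t "u + x *\<^sub>R d" "u + y *\<^sub>R d"]
        \<open>0 < t\<close> \<open>t < 1\<close>
      by (simp add: \<phi>_eq)
  qed simp
  moreover have "(\<phi> has_real_derivative inner (df u) d - \<mu> * inner u d) (at 0)"
    using has_real_derivative_along_line[OF grad, of u d 0]
    unfolding \<phi>_def by (auto intro!: derivative_eq_intros)
  ultimately have "inner (df u) d - \<mu> * inner u d \<le> \<phi> 1 - \<phi> 0"
    using convex_on_imp_above_tangent[of UNIV \<phi> 0 1] by simp
  moreover have "\<phi> 1 = f v - \<mu> / 2 * inner u u - \<mu> * inner u d - \<mu> / 2 * inner d d"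
    by (simp add: \<phi>_def d_def algebra_simps)
  moreover have "\<phi> 0 = f u - \<mu> / 2 * inner u u"
    by (simp add: \<phi>_def)
  ultimately show ?thesis
    unfolding d_def[symmetric] power2_norm_eq_inner by linarith
qed

lemma I_f_nonneg:
  fixes f :: "'a::real_inner \<Rightarrow> real"
  assumes grad: "\<And>u. (f has_derivative (\<lambda>h. inner (df u) h)) (at u)"
    and lipschitz: "\<And>u v. norm (df u - df v) \<le> L * norm (u - v)"
    and sconv: "strongly_convex \<mu> f"
    and \<mu>_less_L: "\<mu> < L"
  shows "0 \<le> I_f \<mu> L f df u v"
proof -
  define M where "M = L - \<mu>"
  define G where "G = df u - df v - \<mu> *\<^sub>R (u - v)"
  \<comment> \<open>The descent bound from u and the strong convexity bound from v, both evaluated at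
     the point w, add up to exactly I_f.\<close>
  define w where "w = u - (1 / M) *\<^sub>R G"
  have M: "M \<noteq> 0" and L_eq: "L = M + \<mu>"
    using \<mu>_less_L by (simp_all add: M_def)
  have w_u: "w - u = - ((1 / M) *\<^sub>R G)" and w_v: "w - v = (u - v) - (1 / M) *\<^sub>R G"
    by (simp_all add: w_def)
  have I_f_eq: "I_f \<mu> L f df u v
      = f u - f v - inner (df v) (u - v) - \<mu> / 2 * (norm (u - v))\<^sup>2 - (norm G)\<^sup>2 / (2 * M)"
    unfolding I_f_def G_def[symmetric] M_def[symmetric] by simp
  have "df u = df v + G + \<mu> *\<^sub>R (u - v)"
    by (simp add: G_def)
  then have df_u_G: "inner (df u) G = inner (df v) G + (norm G)\<^sup>2 + \<mu> * inner (u - v) G"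
    by (simp add: inner_add_left power2_norm_eq_inner)
  have df_u_w: "inner (df u) (w - u) = - inner (df u) G / M"
    unfolding w_u by simp
  have df_v_w: "inner (df v) (w - v) = inner (df v) (u - v) - inner (df v) G / M"
    unfolding w_v by (simp add: inner_diff_right)
  have norm_w_v: "(norm (w - v))\<^sup>2 = (norm (u - v))\<^sup>2 - 2 * inner (u - v) G / M + (norm G)\<^sup>2 / M\<^sup>2"
    unfolding w_v power2_norm_diff by (simp add: power_divide)
  have norm_w_u: "(norm (w - u))\<^sup>2 = (norm G)\<^sup>2 / M\<^sup>2"
    unfolding w_u by (simp add: power_divide)
  have "I_f \<mu> L f df u v
      = (f u + inner (df u) (w - u) + L / 2 * (norm (w - u))\<^sup>2 - f w)
        + (f w - f v - inner (df v) (w - v) - \<mu> / 2 * (norm (w - v))\<^sup>2)"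
    unfolding I_f_eq df_u_w df_u_G df_v_w norm_w_v norm_w_u
    using M by (simp add: L_eq field_simps power2_eq_square)
  moreover have "f w \<le> f u + inner (df u) (w - u) + L / 2 * (norm (w - u))\<^sup>2"
    by (rule lipschitz_gradient_upper_bound[OF grad lipschitz])
  moreover have "f v + inner (df v) (w - v) + \<mu> / 2 * (norm (w - v))\<^sup>2 \<le> f w"
    by (rule strongly_convex_lower_bound[OF grad sconv])
  ultimately show ?thesis
    by linarith
qed

lemma I_f_normalize:
  fixes f :: "'a::real_inner \<Rightarrow> real"
  assumes L: "L \<noteq> 0" and \<mu>_L: "\<mu> \<noteq> L"
  shows "I_f \<mu> L f df u v = L * I_f 0 (1 - \<mu> / L)
      (\<lambda>w. (f (c + w) - f c - inner p w - \<mu> / 2 * (norm w)\<^sup>2) / L)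
      (\<lambda>w. (1 / L) *\<^sub>R (df (c + w) - p - \<mu> *\<^sub>R w)) (u - c) (v - c)"
proof -
  define h where "h = (\<lambda>w. (f (c + w) - f c - inner p w - \<mu> / 2 * (norm w)\<^sup>2) / L)"
  define P where "P = (\<lambda>w. (1 / L) *\<^sub>R (df (c + w) - p - \<mu> *\<^sub>R w))"
  have "u - c = (u - v) - (c - v)"
    by simp
  then have norm_u_c: "(norm (u - c))\<^sup>2 = (norm (u - v))\<^sup>2 + 2 * inner (u - v) (v - c) + (norm (v - c))\<^sup>2"
    by (simp only: power2_norm_diff[of "u - v" "c - v"]) (simp add: norm_minus_commute inner_diff_right)
  have h_diff: "h (u - c) - h (v - c)
      = (f u - f v - inner p (u - v) - \<mu> / 2 * (norm (u - v))\<^sup>2 - \<mu> * inner (u - v) (v - c)) / L"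
    using L unfolding h_def norm_u_c by (simp add: inner_diff_right field_simps)
  have P_v: "inner (P (v - c)) ((u - c) - (v - c))
      = (inner (df v) (u - v) - inner p (u - v) - \<mu> * inner (u - v) (v - c)) / L"
    by (simp add: P_def inner_diff_left inner_diff_right inner_commute right_diff_distrib diff_divide_distrib)
  have "P (u - c) - P (v - c) = (1 / L) *\<^sub>R (df u - df v - \<mu> *\<^sub>R (u - v))"
    by (simp add: P_def algebra_simps)
  then have P_diff: "(norm (P (u - c) - P (v - c)))\<^sup>2 = (norm (df u - df v - \<mu> *\<^sub>R (u - v)))\<^sup>2 / L\<^sup>2"
    by (simp add: power_divide)
  have "L * I_f 0 (1 - \<mu> / L) h P (u - c) (v - c)
      = L * ((h (u - c) - h (v - c)) - inner (P (v - c)) ((u - c) - (v - c))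
          - (norm (P (u - c) - P (v - c)))\<^sup>2 / (2 * (1 - \<mu> / L)))"
    by (simp add: I_f_def)
  also have "\<dots> = I_f \<mu> L f df u v"
    unfolding h_diff P_v P_diff I_f_def using L \<mu>_L by (simp add: field_simps power2_eq_square)
  finally show ?thesis
    unfolding h_def P_def by simp
qed

section \<open>Proximal points and first-order optimality\<close>

lemma le_of_le_plus_small_multiple:
  fixes a b C :: real
  assumes le: "\<And>t. 0 < t \<Longrightarrow> t \<le> 1 \<Longrightarrow> a \<le> b + t * C"
  shows "a \<le> b"
proof (cases "C \<le> 0")
  case True
  then show ?thesis
    using le[of 1] by simp
next
  case False
  show ?thesis
  proof (rule ccontr)
    assume "\<not> a \<le> b"
    define t where "t = min 1 ((a - b) / (2 * C))"
    have "0 < t" "t \<le> 1"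
      using False \<open>\<not> a \<le> b\<close> by (simp_all add: t_def)
    moreover have "t \<le> (a - b) / (2 * C)"
      by (simp add: t_def)
    then have "t * (2 * C) \<le> a - b"
      using False by (simp add: le_divide_eq)
    ultimately show False
      using le[of t] \<open>\<not> a \<le> b\<close> by simp
  qed
qed

lemma ereal_proper_minimizer_finite:
  fixes g :: "'a \<Rightarrow> ereal" and h :: "'a \<Rightarrow> real"
  assumes proper: "ereal_proper g"
    and min: "\<And>w. g z + ereal (h z) \<le> g w + ereal (h w)"
  shows "\<exists>c. g z = ereal c"
proof -
  obtain w where "g w < \<infinity>"
    using proper unfolding ereal_proper_def by auto
  then have "g z + ereal (h z) < \<infinity>"
    using min[of w] by (auto simp: order.strict_trans1)
  moreover have "g z \<noteq> -\<infinity>"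
    using proper unfolding ereal_proper_def by auto
  ultimately show ?thesis
    by (cases "g z") auto
qed

lemma ereal_convex_minimizer_subgradient:
  fixes g :: "'a::real_inner \<Rightarrow> ereal" and h :: "'a \<Rightarrow> real"
  assumes conv: "ereal_convex g" and proper: "ereal_proper g"
    and min: "\<And>w. g z + ereal (h z) \<le> g w + ereal (h w)"
    and quadratic: "\<And>t. 0 < t \<Longrightarrow> t \<le> 1 \<Longrightarrow>
      h (z + t *\<^sub>R (w - z)) \<le> h z + t * inner p (w - z) + t\<^sup>2 * C"
  shows "0 \<le> I_g g w z (- p)"
proof -
  obtain gz where gz: "g z = ereal gz"
    using ereal_proper_minimizer_finite[OF proper min] by blast
  show ?thesis
  proof (cases "g w")
    case (real gw)
    have "gz \<le> (gw + inner p (w - z)) + t * C" if t: "0 < t" "t \<le> 1" for t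
    proof -
      have zt: "(1 - t) *\<^sub>R z + t *\<^sub>R w = z + t *\<^sub>R (w - z)"
        by (simp add: algebra_simps)
      have "ereal (gz + h z) \<le> g (z + t *\<^sub>R (w - z)) + ereal (h (z + t *\<^sub>R (w - z)))"
        using min gz by simp
      also have "\<dots> \<le> ereal (1 - t) * g z + ereal t * g w + ereal (h (z + t *\<^sub>R (w - z)))"
        using conv t unfolding ereal_convex_def zt[symmetric] by (intro add_right_mono) auto
      finally have "gz + h z \<le> (1 - t) * gz + t * gw + h (z + t *\<^sub>R (w - z))"
        by (simp add: gz real)
      with quadratic[OF t] have "t * gz \<le> t * ((gw + inner p (w - z)) + t * C)"
        by (simp add: algebra_simps power2_eq_square)
      with t show ?thesis
        by simp
    qed
    then have "gz \<le> gw + inner p (w - z)"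
      by (rule le_of_le_plus_small_multiple)
    then show ?thesis
      by (simp add: I_g_def gz real)
  next
    case PInf
    then show ?thesis
      by (simp add: I_g_def gz)
  next
    case MInf
    then show ?thesis
      using proper unfolding ereal_proper_def by simp
  qed
qed

lemma prox_finite:
  assumes "ereal_proper g" and "is_prox g \<gamma> x z"
  shows "\<exists>c. g z = ereal c"
  using assms by (intro ereal_proper_minimizer_finite[where h = "\<lambda>w. 1 / (2 * \<gamma>) * (norm (x - w))\<^sup>2"])
    (auto simp: is_prox_def)

lemma prox_subgradient:
  fixes g :: "'a::real_inner \<Rightarrow> ereal"
  assumes conv: "ereal_convex g" and proper: "ereal_proper g"
    and prox: "is_prox g \<gamma> x z" and \<gamma>: "0 < \<gamma>"
  shows "0 \<le> I_g g w z ((1 / \<gamma>) *\<^sub>R (x - z))"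
proof -
  have norm_eq: "(norm (x - (z + t *\<^sub>R (w - z))))\<^sup>2
      = (norm (x - z))\<^sup>2 - 2 * t * inner (x - z) (w - z) + t\<^sup>2 * (norm (w - z))\<^sup>2" for t
  proof -
    have "x - (z + t *\<^sub>R (w - z)) = (x - z) - t *\<^sub>R (w - z)"
      by simp
    then have "(norm (x - (z + t *\<^sub>R (w - z))))\<^sup>2
        = (norm (x - z))\<^sup>2 - 2 * inner (x - z) (t *\<^sub>R (w - z)) + (norm (t *\<^sub>R (w - z)))\<^sup>2"
      by (simp only: power2_norm_diff[of "x - z"])
    then show ?thesis
      by (simp add: power_mult_distrib)
  qed
  have "1 / (2 * \<gamma>) * (norm (x - (z + t *\<^sub>R (w - z))))\<^sup>2
      = 1 / (2 * \<gamma>) * (norm (x - z))\<^sup>2 + t * inner (- ((1 / \<gamma>) *\<^sub>R (x - z))) (w - z)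
        + t\<^sup>2 * (1 / (2 * \<gamma>) * (norm (w - z))\<^sup>2)" for t
    unfolding norm_eq using \<gamma> by (simp add: inner_diff_left field_simps)
  then have "0 \<le> I_g g w z (- (- ((1 / \<gamma>) *\<^sub>R (x - z))))"
    using prox unfolding is_prox_def
    by (intro ereal_convex_minimizer_subgradient[OF conv proper,
          where h = "\<lambda>w. 1 / (2 * \<gamma>) * (norm (x - w))\<^sup>2" and C = "1 / (2 * \<gamma>) * (norm (w - z))\<^sup>2"])
      auto
  then show ?thesis
    by simp
qed

lemma composite_minimizer_finite:
  fixes f :: "'a \<Rightarrow> real" and g :: "'a \<Rightarrow> ereal"
  assumes proper: "ereal_proper g"
    and min: "\<And>u. ereal (f xs) + g xs \<le> ereal (f u) + g u"
  shows "\<exists>c. g xs = ereal c"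
  using min by (intro ereal_proper_minimizer_finite[OF proper, where h = f]) (simp add: add.commute)

lemma composite_minimizer_subgradient:
  fixes f :: "'a::real_inner \<Rightarrow> real" and g :: "'a \<Rightarrow> ereal"
  assumes grad: "\<And>u. (f has_derivative (\<lambda>h. inner (df u) h)) (at u)"
    and lipschitz: "\<And>u v. norm (df u - df v) \<le> L * norm (u - v)"
    and conv: "ereal_convex g" and proper: "ereal_proper g"
    and min: "\<And>u. ereal (f xs) + g xs \<le> ereal (f u) + g u"
  shows "0 \<le> I_g g w xs (- df xs)"
proof (rule ereal_convex_minimizer_subgradient[OF conv proper, where h = f])
  show "g xs + ereal (f xs) \<le> g u + ereal (f u)" for u
    using min by (simp add: add.commute)
  show "f (xs + t *\<^sub>R (w - xs)) \<le> f xs + t * inner (df xs) (w - xs) + t\<^sup>2 * (L / 2 * (norm (w - xs))\<^sup>2)" for t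
    using lipschitz_gradient_upper_bound[OF grad lipschitz, of "xs + t *\<^sub>R (w - xs)" xs]
    by (simp add: power_mult_distrib mult.left_commute)
qed

section \<open>The Lyapunov certificate of Prox-TMM\<close>

lemma prox_tmm_normalized_identity:
  fixes h G :: "'a::real_inner \<Rightarrow> real" and P :: "'a \<Rightarrow> 'a" and r :: real
  assumes r: "r\<^sup>2 \<noteq> 1" and P_0: "P 0 = 0"
    and y1: "(1 + r) *\<^sub>R y1 = (2 * r) *\<^sub>R z0 + (1 - r) *\<^sub>R ((1 - r\<^sup>2) *\<^sub>R y0 - P y0 - s0)"
    and z1: "r *\<^sub>R z1 = (r * (1 - r)) *\<^sub>R z0 - P y1 - s1"
  shows "(1 - r)\<^sup>2 * ((1 - r\<^sup>2) * I_f 0 (1 - r\<^sup>2) h P y0 0 + r\<^sup>2 * (G 0 - G z0 - inner s0 (0 - z0))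
        + r * (r - 1) * (G z0 - G 0) + (norm s0)\<^sup>2 / 2 + r\<^sup>2 * (norm z0)\<^sup>2) - r\<^sup>2 * (norm z1)\<^sup>2
    = (1 - r)\<^sup>2 * ((1 - r\<^sup>2) * I_f 0 (1 - r\<^sup>2) h P y0 y1) + (1 - r\<^sup>2) * I_f 0 (1 - r\<^sup>2) h P y1 0
      + r * (2 - r) * ((1 - r\<^sup>2) * I_f 0 (1 - r\<^sup>2) h P 0 y1)
      + r * (1 - r)\<^sup>2 * (G z1 - G z0 - inner s0 (z1 - z0)) + r * (2 - (1 - r)\<^sup>2) * (G z1 - G 0)
      + 2 * r * (G 0 - G z1 - inner s1 (0 - z1))
      + (1 - r)\<^sup>2 / 2 * (norm (s0 - s1))\<^sup>2 + (1 - (1 - r)\<^sup>2 / 2) * (norm s1)\<^sup>2"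
    (is "?lhs = ?rhs")
proof -
  define P0 P1 where "P0 = P y0" and "P1 = P y1"
  have I_f_0: "(1 - r\<^sup>2) * I_f 0 (1 - r\<^sup>2) h P u v
      = (1 - r\<^sup>2) * (h u - h v - inner (P v) (u - v)) - inner (P u - P v) (P u - P v) / 2" for u v
    using r by (simp add: I_f_def power2_norm_eq_inner field_simps)
  have "inner P1 ((1 + r) *\<^sub>R y1) = inner P1 ((2 * r) *\<^sub>R z0 + (1 - r) *\<^sub>R ((1 - r\<^sup>2) *\<^sub>R y0 - P0 - s0))"
    by (simp only: y1 P0_def)
  then have P1_y1: "(1 + r) * inner P1 y1
      = 2 * r * inner P1 z0 + (1 - r) * ((1 - r\<^sup>2) * inner P1 y0 - inner P1 P0 - inner P1 s0)"
    by (simp add: inner_add_right inner_diff_right)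
  have "inner (r *\<^sub>R z1) (r *\<^sub>R z1) = inner ((r * (1 - r)) *\<^sub>R z0 - P1 - s1) ((r * (1 - r)) *\<^sub>R z0 - P1 - s1)"
    by (simp only: z1 P1_def)
  then have z1_z1: "r\<^sup>2 * inner z1 z1 = (r * (1 - r))\<^sup>2 * inner z0 z0 + inner P1 P1 + inner s1 s1
      - 2 * (r * (1 - r)) * inner P1 z0 - 2 * (r * (1 - r)) * inner s1 z0 + 2 * inner P1 s1"
    by (simp add: inner_diff_left inner_diff_right inner_commute power2_eq_square algebra_simps)
  have "inner s0 (r *\<^sub>R z1) = inner s0 ((r * (1 - r)) *\<^sub>R z0 - P1 - s1)"
    by (simp only: z1 P1_def)
  then have s0_z1: "r * inner s0 z1 = r * (1 - r) * inner s0 z0 - inner s0 P1 - inner s0 s1"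
    by (simp add: inner_diff_right)
  have "inner s1 (r *\<^sub>R z1) = inner s1 ((r * (1 - r)) *\<^sub>R z0 - P1 - s1)"
    by (simp only: z1 P1_def)
  then have s1_z1: "r * inner s1 z1 = r * (1 - r) * inner s1 z0 - inner s1 P1 - inner s1 s1"
    by (simp add: inner_diff_right)
  have "?lhs - ?rhs
    = - (1 - r) * ((1 + r) * inner P1 y1
        - (2 * r * inner P1 z0 + (1 - r) * ((1 - r\<^sup>2) * inner P1 y0 - inner P1 P0 - inner P1 s0)))
      - (r\<^sup>2 * inner z1 z1 - ((r * (1 - r))\<^sup>2 * inner z0 z0 + inner P1 P1 + inner s1 s1
        - 2 * (r * (1 - r)) * inner P1 z0 - 2 * (r * (1 - r)) * inner s1 z0 + 2 * inner P1 s1))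
      + (1 - r)\<^sup>2 * (r * inner s0 z1 - (r * (1 - r) * inner s0 z0 - inner s0 P1 - inner s0 s1))
      - 2 * (r * inner s1 z1 - (r * (1 - r) * inner s1 z0 - inner s1 P1 - inner s1 s1))"
    unfolding I_f_0 P0_def[symmetric] P1_def[symmetric] P_0 power2_norm_eq_inner
    by (simp add: inner_diff_left inner_diff_right inner_commute) (simp add: field_simps power2_eq_square)
  then show ?thesis
    using P1_y1 z1_z1 s0_z1 s1_z1 by simp
qed

lemma prox_tmm_normalized_decrease:
  fixes h G :: "'a::real_inner \<Rightarrow> real" and P :: "'a \<Rightarrow> 'a" and r :: real
  assumes r: "0 < r" "r < 1" and P_0: "P 0 = 0"
    and y1: "(1 + r) *\<^sub>R y1 = (2 * r) *\<^sub>R z0 + (1 - r) *\<^sub>R ((1 - r\<^sup>2) *\<^sub>R y0 - P y0 - s0)"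
    and z1: "r *\<^sub>R z1 = (r * (1 - r)) *\<^sub>R z0 - P y1 - s1"
    and "0 \<le> I_f 0 (1 - r\<^sup>2) h P y0 y1" "0 \<le> I_f 0 (1 - r\<^sup>2) h P y1 0" "0 \<le> I_f 0 (1 - r\<^sup>2) h P 0 y1"
    and "0 \<le> G z1 - G z0 - inner s0 (z1 - z0)" "0 \<le> G z1 - G 0" "0 \<le> G 0 - G z1 - inner s1 (0 - z1)"
  shows "r\<^sup>2 * (norm z1)\<^sup>2 \<le> (1 - r)\<^sup>2 * ((1 - r\<^sup>2) * I_f 0 (1 - r\<^sup>2) h P y0 0
      + r\<^sup>2 * (G 0 - G z0 - inner s0 (0 - z0)) + r * (r - 1) * (G z0 - G 0)
      + (norm s0)\<^sup>2 / 2 + r\<^sup>2 * (norm z0)\<^sup>2)"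
proof -
  have "r\<^sup>2 < 1" and "(1 - r)\<^sup>2 \<le> 1"
    using r by (simp_all add: power_less_one_iff power_le_one)
  moreover have "r\<^sup>2 \<noteq> 1"
    using \<open>r\<^sup>2 < 1\<close> by simp
  ultimately have "0 \<le> (1 - r)\<^sup>2 * ((1 - r\<^sup>2) * I_f 0 (1 - r\<^sup>2) h P y0 0
      + r\<^sup>2 * (G 0 - G z0 - inner s0 (0 - z0)) + r * (r - 1) * (G z0 - G 0)
      + (norm s0)\<^sup>2 / 2 + r\<^sup>2 * (norm z0)\<^sup>2) - r\<^sup>2 * (norm z1)\<^sup>2"
    unfolding prox_tmm_normalized_identity[OF \<open>r\<^sup>2 \<noteq> 1\<close> P_0 y1 z1]
    using assms by (intro add_nonneg_nonneg mult_nonneg_nonneg) simp_all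
  then show ?thesis
    by simp
qed

lemma prox_tmm_normalized_recursion:
  fixes df :: "'a::real_inner \<Rightarrow> 'a"
  assumes L: "L \<noteq> 0" and r: "r \<noteq> 0" "1 + r \<noteq> 0" and \<mu>: "\<mu> = r\<^sup>2 * L"
    and x1: "x1 = y0 - (1 / L) *\<^sub>R df y0 - r *\<^sub>R (zb0 - z0)"
    and y1: "y1 = (2 * r / (1 + r)) *\<^sub>R z0 + ((1 - r) / (1 + r)) *\<^sub>R x1"
    and zb1: "zb1 = (1 - r) *\<^sub>R z0 + r *\<^sub>R y1 - (1 / (r * L)) *\<^sub>R df y1"
  shows "(1 + r) *\<^sub>R (y1 - xs) = (2 * r) *\<^sub>R (z0 - xs) + (1 - r) *\<^sub>R ((1 - r\<^sup>2) *\<^sub>R (y0 - xs)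
          - (1 / L) *\<^sub>R (df y0 - df xs - \<mu> *\<^sub>R (y0 - xs)) - (1 / L) *\<^sub>R ((r * L) *\<^sub>R (zb0 - z0) + df xs))"
    and "r *\<^sub>R (z1 - xs) = (r * (1 - r)) *\<^sub>R (z0 - xs)
          - (1 / L) *\<^sub>R (df y1 - df xs - \<mu> *\<^sub>R (y1 - xs)) - (1 / L) *\<^sub>R ((r * L) *\<^sub>R (zb1 - z1) + df xs)"
proof -
  have x1_xs: "(1 - r\<^sup>2) *\<^sub>R (y0 - xs) - (1 / L) *\<^sub>R (df y0 - df xs - \<mu> *\<^sub>R (y0 - xs))
      - (1 / L) *\<^sub>R ((r * L) *\<^sub>R (zb0 - z0) + df xs) = x1 - xs"
    using L unfolding x1 \<mu> by (simp add: algebra_simps)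
  have "(1 + r) *\<^sub>R (y1 - xs) = (1 + r) *\<^sub>R y1 - (1 + r) *\<^sub>R xs"
    by (simp add: scaleR_diff_right)
  also have "\<dots> = (2 * r) *\<^sub>R z0 + (1 - r) *\<^sub>R x1 - (1 + r) *\<^sub>R xs"
    using r unfolding y1 by (simp add: scaleR_add_right)
  also have "\<dots> = (2 * r) *\<^sub>R (z0 - xs) + (1 - r) *\<^sub>R (x1 - xs)"
    by (simp add: algebra_simps) (metis mult_2_right scaleR_left_distrib)
  finally show "(1 + r) *\<^sub>R (y1 - xs) = (2 * r) *\<^sub>R (z0 - xs) + (1 - r) *\<^sub>R ((1 - r\<^sup>2) *\<^sub>R (y0 - xs)
          - (1 / L) *\<^sub>R (df y0 - df xs - \<mu> *\<^sub>R (y0 - xs)) - (1 / L) *\<^sub>R ((r * L) *\<^sub>R (zb0 - z0) + df xs))"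
    unfolding x1_xs .
  show "r *\<^sub>R (z1 - xs) = (r * (1 - r)) *\<^sub>R (z0 - xs)
          - (1 / L) *\<^sub>R (df y1 - df xs - \<mu> *\<^sub>R (y1 - xs)) - (1 / L) *\<^sub>R ((r * L) *\<^sub>R (zb1 - z1) + df xs)"
    using L r unfolding zb1 \<mu> by (simp add: algebra_simps power2_eq_square)
qed

lemma prox_tmm_lyapunov_decrease:
  fixes f G :: "'a::real_inner \<Rightarrow> real" and df :: "'a \<Rightarrow> 'a"
  assumes L: "0 < L" and r: "0 < r" "r < 1" and \<mu>: "\<mu> = r\<^sup>2 * L"
    and x1: "x1 = y0 - (1 / L) *\<^sub>R df y0 - r *\<^sub>R (zb0 - z0)"
    and y1: "y1 = (2 * r / (1 + r)) *\<^sub>R z0 + ((1 - r) / (1 + r)) *\<^sub>R x1"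
    and zb1: "zb1 = (1 - r) *\<^sub>R z0 + r *\<^sub>R y1 - (1 / (r * L)) *\<^sub>R df y1"
    and f_y0_y1: "0 \<le> I_f \<mu> L f df y0 y1" and f_y1_xs: "0 \<le> I_f \<mu> L f df y1 xs"
    and f_xs_y1: "0 \<le> I_f \<mu> L f df xs y1"
    and g_z1_z0: "0 \<le> G z1 - G z0 - inner ((r * L) *\<^sub>R (zb0 - z0)) (z1 - z0)"
    and g_z1_xs: "0 \<le> G z1 - G xs - inner (- df xs) (z1 - xs)"
    and g_xs_z1: "0 \<le> G xs - G z1 - inner ((r * L) *\<^sub>R (zb1 - z1)) (xs - z1)"
  shows "\<mu> * (norm (z1 - xs))\<^sup>2 \<le> (1 - r)\<^sup>2 * ((1 - r\<^sup>2) * I_f \<mu> L f df y0 xs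
      + r\<^sup>2 * (G xs - G z0 - inner ((r * L) *\<^sub>R (zb0 - z0)) (xs - z0))
      + r * (r - 1) * (G z0 - G xs - inner (- df xs) (z0 - xs))
      + 1 / (2 * L) * (norm ((r * L) *\<^sub>R (zb0 - z0) - - df xs))\<^sup>2 + \<mu> * (norm (z0 - xs))\<^sup>2)"
proof -
  \<comment> \<open>Normalised data, centred at xs: h and P are f and its gradient with the tangent at xs
     and \<mu>/2 |.|^2 removed, scaled by 1/L; Gn is g tilted by the subgradient - df xs; s0 and s1
     are the subgradient residuals (s_g^k - s_g^*) / L and (s_g^(k+1) - s_g^*) / L.\<close>
  define h where "h = (\<lambda>w. (f (xs + w) - f xs - inner (df xs) w - \<mu> / 2 * (norm w)\<^sup>2) / L)"
  define P where "P = (\<lambda>w. (1 / L) *\<^sub>R (df (xs + w) - df xs - \<mu> *\<^sub>R w))"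
  define Gn where "Gn = (\<lambda>w. (G (xs + w) - G xs + inner (df xs) w) / L)"
  define s0 where "s0 = (1 / L) *\<^sub>R ((r * L) *\<^sub>R (zb0 - z0) + df xs)"
  define s1 where "s1 = (1 / L) *\<^sub>R ((r * L) *\<^sub>R (zb1 - z1) + df xs)"
  have r2: "0 < 1 - r\<^sup>2"
    using r by (simp add: power_less_one_iff)
  have \<mu>_L: "\<mu> / L = r\<^sup>2" "\<mu> \<noteq> L"
    using L r2 by (simp_all add: \<mu>)
  have I_f_eq: "I_f \<mu> L f df u v = L * I_f 0 (1 - r\<^sup>2) h P (u - xs) (v - xs)" for u v
    unfolding h_def P_def \<mu>_L(1)[symmetric] using L \<mu>_L(2) by (intro I_f_normalize) simp_all
  have G_eq: "G u - G v - inner S (u - v)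
      = L * (Gn (u - xs) - Gn (v - xs) - inner ((1 / L) *\<^sub>R (S + df xs)) ((u - xs) - (v - xs)))" for u v S
    using L by (simp add: Gn_def inner_diff_right inner_add_left field_simps)
  have rec_y: "(1 + r) *\<^sub>R (y1 - xs)
      = (2 * r) *\<^sub>R (z0 - xs) + (1 - r) *\<^sub>R ((1 - r\<^sup>2) *\<^sub>R (y0 - xs) - P (y0 - xs) - s0)"
    using prox_tmm_normalized_recursion(1)[OF _ _ _ \<mu> x1 y1 zb1] L r
    by (simp add: P_def s0_def)
  have rec_z: "r *\<^sub>R (z1 - xs) = (r * (1 - r)) *\<^sub>R (z0 - xs) - P (y1 - xs) - s1"
    using prox_tmm_normalized_recursion(2)[OF _ _ _ \<mu> x1 y1 zb1] L r
    by (simp add: P_def s1_def)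
  have nonneg_f: "0 \<le> I_f 0 (1 - r\<^sup>2) h P (u - xs) (v - xs)"
    if "0 \<le> I_f \<mu> L f df u v" for u v
    using that L unfolding I_f_eq by (simp add: zero_le_mult_iff)
  have "r\<^sup>2 * (norm (z1 - xs))\<^sup>2 \<le> (1 - r)\<^sup>2 * ((1 - r\<^sup>2) * I_f 0 (1 - r\<^sup>2) h P (y0 - xs) 0
      + r\<^sup>2 * (Gn 0 - Gn (z0 - xs) - inner s0 (0 - (z0 - xs))) + r * (r - 1) * (Gn (z0 - xs) - Gn 0)
      + (norm s0)\<^sup>2 / 2 + r\<^sup>2 * (norm (z0 - xs))\<^sup>2)"
    (is "?lhs \<le> ?rhs")
  proof (rule prox_tmm_normalized_decrease[OF r _ rec_y rec_z])
    show "P 0 = 0"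
      by (simp add: P_def)
    show "0 \<le> I_f 0 (1 - r\<^sup>2) h P (y0 - xs) (y1 - xs)" "0 \<le> I_f 0 (1 - r\<^sup>2) h P (y1 - xs) 0"
      "0 \<le> I_f 0 (1 - r\<^sup>2) h P 0 (y1 - xs)"
      using nonneg_f[OF f_y0_y1] nonneg_f[OF f_y1_xs] nonneg_f[OF f_xs_y1] by simp_all
    show "0 \<le> Gn (z1 - xs) - Gn (z0 - xs) - inner s0 (z1 - xs - (z0 - xs))"
      using g_z1_z0 L unfolding G_eq s0_def by (simp add: zero_le_mult_iff)
    show "0 \<le> Gn (z1 - xs) - Gn 0"
      using g_z1_xs L unfolding G_eq by (simp add: zero_le_mult_iff)
    show "0 \<le> Gn 0 - Gn (z1 - xs) - inner s1 (0 - (z1 - xs))"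
      using g_xs_z1 L unfolding G_eq s1_def by (simp add: zero_le_mult_iff)
  qed
  then have scaled: "L * ?lhs \<le> L * ?rhs"
    using L by simp
  have I_f_y0_xs: "(1 - r\<^sup>2) * I_f \<mu> L f df y0 xs = L * ((1 - r\<^sup>2) * I_f 0 (1 - r\<^sup>2) h P (y0 - xs) 0)"
    by (simp add: I_f_eq)
  have gap_xs_z0: "G xs - G z0 - inner ((r * L) *\<^sub>R (zb0 - z0)) (xs - z0)
      = L * (Gn 0 - Gn (z0 - xs) - inner s0 (0 - (z0 - xs)))"
    unfolding G_eq s0_def by simp
  have gap_z0_xs: "G z0 - G xs - inner (- df xs) (z0 - xs) = L * (Gn (z0 - xs) - Gn 0)"
    unfolding G_eq by simp
  have norm_s0: "1 / (2 * L) * (norm ((r * L) *\<^sub>R (zb0 - z0) - - df xs))\<^sup>2 = L * ((norm s0)\<^sup>2 / 2)"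
    using L by (simp add: s0_def power_mult_distrib power2_eq_square)
  show ?thesis
    using scaled unfolding I_f_y0_xs gap_xs_z0 gap_z0_xs norm_s0 by (simp add: \<mu> algebra_simps)
qed

theorem lemma6:
  fixes f :: "'a::{real_inner, complete_space} \<Rightarrow> real"
    and df :: "'a \<Rightarrow> 'a"
    and g :: "'a \<Rightarrow> ereal"
    and \<mu> L q :: real
    and xs :: 'a
    and x y zb z :: "nat \<Rightarrow> 'a"
    and k :: nat
  assumes mu_pos: "0 < \<mu>" and mu_L: "\<mu> < L"
    and grad: "\<And>u. (f has_derivative (\<lambda>h. inner (df u) h)) (at u)"
    and sconv: "strongly_convex \<mu> f"
    and smooth: "\<And>u v. norm (df u - df v) \<le> L * norm (u - v)"
    and g_conv: "ereal_convex g" and g_proper: "ereal_proper g" and g_lsc: "lsc g"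
    and q_def: "q = \<mu> / L"
    and xs_min: "\<And>u. ereal (f xs) + g xs \<le> ereal (f u) + g u"
    and z0: "z 0 = x 0"
    and y_def: "\<And>n. y n = (2 * sqrt q / (1 + sqrt q)) *\<^sub>R z n + ((1 - sqrt q) / (1 + sqrt q)) *\<^sub>R x n"
    and zb_def: "\<And>n. zb (Suc n) = (1 - sqrt q) *\<^sub>R z n + sqrt q *\<^sub>R y n - (1 / (sqrt q * L)) *\<^sub>R df (y n)"
    and z_def: "\<And>n. is_prox g (1 / (sqrt q * L)) (zb (Suc n)) (z (Suc n))"
    and x_def: "\<And>n. x (Suc n) = y n - (1 / L) *\<^sub>R df (y n) - sqrt q *\<^sub>R (zb (Suc n) - z (Suc n))"
    and k_pos: "1 \<le> k"
  shows "ereal (\<mu> * (norm (z (Suc k) - xs))\<^sup>2) \<le> ereal ((1 - sqrt q)\<^sup>2) *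
     (ereal ((1 - q) * I_f \<mu> L f df (y (k - 1)) xs)
      + ereal q * I_g g xs (z k) ((sqrt q * L) *\<^sub>R (zb k - z k))
      + ereal (sqrt q * (sqrt q - 1)) * I_g g (z k) xs (- df xs)
      + ereal (1 / (2 * L) * (norm ((sqrt q * L) *\<^sub>R (zb k - z k) - (- df xs)))\<^sup>2)
      + ereal (\<mu> * (norm (z k - xs))\<^sup>2))"
proof -
  obtain j where k: "k = Suc j"
    using k_pos by (cases k) auto
  have L: "0 < L" and q: "0 < q" "q < 1"
    using mu_pos mu_L by (simp_all add: q_def)
  have r: "0 < sqrt q" "sqrt q < 1" and \<mu>: "\<mu> = (sqrt q)\<^sup>2 * L"
    using q L by (simp_all add: q_def)
  define G where "G w = real_of_ereal (g w)" for w
  have "\<exists>c. g (z k) = ereal c" "\<exists>c. g (z (Suc k)) = ereal c" "\<exists>c. g xs = ereal c"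
    using prox_finite[OF g_proper z_def] composite_minimizer_finite[OF g_proper xs_min] k by auto
  then have I_g_eq: "I_g g u v s = ereal (G u - G v - inner s (u - v))"
    if "u \<in> {z k, z (Suc k), xs}" "v \<in> {z k, z (Suc k), xs}" for u v s
    using that by (auto simp: I_g_def G_def)
  have \<gamma>: "0 < 1 / (sqrt q * L)"
    using r L by simp
  have "0 \<le> I_g g (z (Suc k)) (z k) ((sqrt q * L) *\<^sub>R (zb k - z k))"
    using prox_subgradient[OF g_conv g_proper z_def[of j] \<gamma>] k by simp
  moreover have "0 \<le> I_g g xs (z (Suc k)) ((sqrt q * L) *\<^sub>R (zb (Suc k) - z (Suc k)))"
    using prox_subgradient[OF g_conv g_proper z_def[of k] \<gamma>] by simp
  moreover have "0 \<le> I_g g (z (Suc k)) xs (- df xs)"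
    by (rule composite_minimizer_subgradient[OF grad smooth g_conv g_proper xs_min])
  ultimately have "\<mu> * (norm (z (Suc k) - xs))\<^sup>2 \<le> (1 - sqrt q)\<^sup>2 * ((1 - (sqrt q)\<^sup>2) * I_f \<mu> L f df (y j) xs
      + (sqrt q)\<^sup>2 * (G xs - G (z k) - inner ((sqrt q * L) *\<^sub>R (zb k - z k)) (xs - z k))
      + sqrt q * (sqrt q - 1) * (G (z k) - G xs - inner (- df xs) (z k - xs))
      + 1 / (2 * L) * (norm ((sqrt q * L) *\<^sub>R (zb k - z k) - - df xs))\<^sup>2 + \<mu> * (norm (z k - xs))\<^sup>2)"
    using I_g_eq k
    by (intro prox_tmm_lyapunov_decrease[OF L r \<mu> x_def[of j, folded k] y_def zb_def]
        I_f_nonneg[OF grad smooth sconv mu_L]) simp_all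
  then show ?thesis
    using I_g_eq k q by simp
qed

end
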